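(* Let $s$ be a stream type and $p$ a prefix with $p : s$. If $p$ is both empty and maximal, then $s$ is nullable.
   Context: Stream types are generated by $s,t ::= 1 \mid \varepsilon \mid s\cdot t \mid s\,\|\,t \mid s+t \mid s^\star$. Prefixes are generated by $p ::= \mathtt{oneEmp} \mid \mathtt{oneFull} \mid \mathtt{epsEmp} \mid \mathtt{par}(p,p') \mid \mathtt{catA}(p) \mid \mathtt{catB}(p,p') \mid \mathtt{sumEmp} \mid \mathtt{inl}(p) \mid \mathtt{inr}(p) \mid \mathtt{starEmp} \mid \mathtt{starDone} \mid \mathtt{stA}(p) \mid \mathtt{stB}(p,p')$. Maximality (inductive): $\mathtt{epsEmp}$, $\mathtt{oneFull}$, $\mathtt{starDone}$ are maximal; $\mathtt{par}(p_1,p_2)$, $\mathtt{catB}(p_1,p_2)$, $\mathtt{stB}(p_1,p_2)$ are maximal if $p_1$ and $p_2$ are; $\mathtt{inl}(p)$, $\mathtt{inr}(p)$ are maximal if $p$ is; nothing else is maximal. Prefix typing $p : s$ (inductive): $\mathtt{epsEmp}:\varepsilon$; $\mathtt{oneEmp}:1$; $\mathtt{oneFull}:1$; $\mathtt{par}(p_1,p_2): s\|t$ if $p_1:s$, $p_2:t$; $\mathtt{catA}(p): s\cdot t$ if $p:s$; $\mathtt{catB}(p_1,p_2): s\cdot t$ if $p_1:s$, $p_1$ maximal, $p_2:t$; $\mathtt{sumEmp}: s+t$; $\mathtt{inl}(p):s+t$ if $p:s$; $\mathtt{inr}(p):s+t$ if $p:t$; $\mathtt{starEmp}:s^\star$;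 $\mathtt{starDone}:s^\star$; $\mathtt{stA}(p):s^\star$ if $p:s$; $\mathtt{stB}(p,p'):s^\star$ if $p:s$, $p$ maximal, $p':s^\star$. Emptiness (inductive): $\mathtt{epsEmp}$, $\mathtt{oneEmp}$, $\mathtt{sumEmp}$, $\mathtt{starEmp}$ are empty; $\mathtt{par}(p_1,p_2)$ is empty if $p_1,p_2$ are; $\mathtt{catA}(p)$ is empty if $p$ is; nothing else is empty. Nullability (inductive): $\varepsilon$ is nullable; $s\|t$ is nullable if $s$ and $t$ are; nothing else is nullable. *)

theory Defs
  imports Main
begin

datatype sty = One | Eps | Cat sty sty | Par sty sty | Sum sty sty | Star sty

datatype prefix = OneEmp | OneFull | EpsEmp | ParP prefix prefix | CatA prefix
  | CatB prefix prefix | SumEmp | Inl prefix | Inr prefix | StarEmp | StarDone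
  | StA prefix | StB prefix prefix

inductive maximal :: "prefix \<Rightarrow> bool" where
  "maximal EpsEmp"
| "maximal OneFull"
| "maximal StarDone"
| "maximal p1 \<Longrightarrow> maximal p2 \<Longrightarrow> maximal (ParP p1 p2)"
| "maximal p1 \<Longrightarrow> maximal p2 \<Longrightarrow> maximal (CatB p1 p2)"
| "maximal p1 \<Longrightarrow> maximal p2 \<Longrightarrow> maximal (StB p1 p2)"
| "maximal p \<Longrightarrow> maximal (Inl p)"
| "maximal p \<Longrightarrow> maximal (Inr p)"

inductive has_type :: "prefix \<Rightarrow> sty \<Rightarrow> bool" where
  "has_type EpsEmp Eps"
| "has_type OneEmp One"
| "has_type OneFull One"
| "has_type p1 s \<Longrightarrow> has_type p2 t \<Longrightarrow> has_type (ParP p1 p2) (Par s t)"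
| "has_type p s \<Longrightarrow> has_type (CatA p) (Cat s t)"
| "has_type p1 s \<Longrightarrow> maximal p1 \<Longrightarrow> has_type p2 t \<Longrightarrow> has_type (CatB p1 p2) (Cat s t)"
| "has_type SumEmp (Sum s t)"
| "has_type p s \<Longrightarrow> has_type (Inl p) (Sum s t)"
| "has_type p t \<Longrightarrow> has_type (Inr p) (Sum s t)"
| "has_type StarEmp (Star s)"
| "has_type StarDone (Star s)"
| "has_type p s \<Longrightarrow> has_type (StA p) (Star s)"
| "has_type p s \<Longrightarrow> maximal p \<Longrightarrow> has_type p' (Star s) \<Longrightarrow> has_type (StB p p') (Star s)"

inductive is_empty :: "prefix \<Rightarrow> bool" where
  "is_empty EpsEmp"
| "is_empty OneEmp"
| "is_empty SumEmp"
| "is_empty StarEmp"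
| "is_empty p1 \<Longrightarrow> is_empty p2 \<Longrightarrow> is_empty (ParP p1 p2)"
| "is_empty p \<Longrightarrow> is_empty (CatA p)"

inductive nullable :: "sty \<Rightarrow> bool" where
  "nullable Eps"
| "nullable s \<Longrightarrow> nullable t \<Longrightarrow> nullable (Par s t)"

end

theory Submission
  imports Defs
begin

(* Only EpsEmp and ParP prefixes are both empty and maximal, and these are typed only
   by Eps and by parallel composition, so a rule induction on the typing suffices. *)

inductive_cases is_empty_ParP_E: "is_empty (ParP p1 p2)"
inductive_cases maximal_ParP_E: "maximal (ParP p1 p2)"

theorem mainTheorem1:
  assumes "has_type p s" and "is_empty p" and "maximal p"
  shows "nullable s"
  using assms
proof (induction rule: has_type.induct)
  case 1
  show ?case by (rule nullable.intros)
next
  case (4 p1 s p2 t)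
  from \<open>is_empty (ParP p1 p2)\<close> have "is_empty p1" "is_empty p2"
    by (auto elim: is_empty_ParP_E)
  moreover from \<open>maximal (ParP p1 p2)\<close> have "maximal p1" "maximal p2"
    by (auto elim: maximal_ParP_E)
  ultimately show ?case using "4.IH" by (auto intro: nullable.intros)
qed (auto elim: is_empty.cases maximal.cases)

end
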